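(* For all $x\in\mathbb{C}$ and all integers $n\ge0$, \[ \sum_{k=0}^n(-1)^kx^{n-k}\big(L_{k+1}+(x-2)F_k\big)=(-1)^nF_{n+1},\qquad \sum_{k=0}^n(-1)^kx^{n-k}\big(5F_{k+1}+(x-2)L_k\big)=(-1)^nL_{n+1}+2x^{n+1}, \] \[ \sum_{k=0}^n(-1)^kx^{n-k}\big(Q_{k+1}+2(x-1)P_k\big)=2(-1)^nP_{n+1},\qquad \sum_{k=0}^n(-1)^kx^{n-k}\big(4P_{k+1}+(x-1)Q_k\big)=(-1)^nQ_{n+1}+2x^{n+1}. \]
   Context: $F_n,L_n$ are the Fibonacci and Lucas numbers ($F_0=0,F_1=1,L_0=2,L_1=1$, $W_n=W_{n-1}+W_{n-2}$). $P_n,Q_n$ are the Pell and Pell–Lucas numbers: $P_0=0$, $P_1=1$, $Q_0=2$, $Q_1=2$, $W_n=2W_{n-1}+W_{n-2}$. *)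

theory Defs
  imports Complex_Main
begin

fun fibo :: "nat \<Rightarrow> int" where
  "fibo 0 = 0" | "fibo (Suc 0) = 1" | "fibo (Suc (Suc n)) = fibo (Suc n) + fibo n"

fun lucas :: "nat \<Rightarrow> int" where
  "lucas 0 = 2" | "lucas (Suc 0) = 1" | "lucas (Suc (Suc n)) = lucas (Suc n) + lucas n"

fun pell :: "nat \<Rightarrow> int" where
  "pell 0 = 0" | "pell (Suc 0) = 1" | "pell (Suc (Suc n)) = 2 * pell (Suc n) + pell n"

fun pell_lucas :: "nat \<Rightarrow> int" where
  "pell_lucas 0 = 2" | "pell_lucas (Suc 0) = 2"
| "pell_lucas (Suc (Suc n)) = 2 * pell_lucas (Suc n) + pell_lucas n"

end

theory Submission
  imports Defs
begin

text \<open>Each summand has the form \<open>x a k + a (k + 1)\<close> for a suitable sequence \<open>a\<close>,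
  namely \<open>F\<close>, \<open>L\<close>, \<open>2P\<close> or \<open>Q\<close>, by the classical relations between these sequences and their
  companions. The alternating sum \<open>\<Sum>k\<le>n. (-1)^k x^(n-k) (x a k + a (k + 1))\<close> then telescopes
  to \<open>x^(n+1) a 0 + (-1)^n a (n + 1)\<close>, and \<open>F 0 = P 0 = 0\<close>, \<open>L 0 = Q 0 = 2\<close>.\<close>

lemma alternating_power_sum_telescope:
  fixes x :: "'a::comm_ring_1"
  assumes "\<And>k. g k = x * a k + a (Suc k)"
  shows "(\<Sum>k=0..n. (-1)^k * x^(n-k) * g k) = x^(n+1) * a 0 + (-1)^n * a (n+1)"
proof (induction n)
  case 0
  show ?case by (simp add: assms)
next
  case (Suc n)
  have "(\<Sum>k=0..n. (-1)^k * x^(Suc n-k) * g k) = x * (\<Sum>k=0..n. (-1)^k * x^(n-k) * g k)"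
    unfolding sum_distrib_left by (intro sum.cong) (auto simp: Suc_diff_le)
  then have "(\<Sum>k=0..Suc n. (-1)^k * x^(Suc n-k) * g k)
        = x * (\<Sum>k=0..n. (-1)^k * x^(n-k) * g k) + (-1)^Suc n * g (Suc n)"
    by simp
  also have "\<dots> = x^(Suc n+1) * a 0 + (-1)^Suc n * a (Suc n+1)"
    unfolding Suc.IH by (simp add: assms[of "Suc n"] algebra_simps)
  finally show ?case .
qed

lemma lucas_Suc_eq_fibo: "lucas (Suc n) = fibo (Suc n) + 2 * fibo n"
  by (induction n rule: fibo.induct) auto

lemma five_fibo_Suc_eq_lucas: "5 * fibo (Suc n) = lucas (Suc n) + 2 * lucas n"
  by (induction n rule: fibo.induct) auto

lemma pell_lucas_Suc_eq_pell: "pell_lucas (Suc n) = 2 * pell (Suc n) + 2 * pell n"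
  by (induction n rule: pell.induct) auto

lemma four_pell_Suc_eq_pell_lucas: "4 * pell (Suc n) = pell_lucas (Suc n) + pell_lucas n"
  by (induction n rule: pell.induct) auto

theorem corollary10:
  fixes x :: complex and n :: nat
  shows "(\<Sum>k=0..n. (-1)^k * x^(n-k) * (of_int (lucas (k+1)) + (x - 2) * of_int (fibo k)))
           = (-1)^n * of_int (fibo (n+1))
    \<and> (\<Sum>k=0..n. (-1)^k * x^(n-k) * (5 * of_int (fibo (k+1)) + (x - 2) * of_int (lucas k)))
           = (-1)^n * of_int (lucas (n+1)) + 2 * x^(n+1)
    \<and> (\<Sum>k=0..n. (-1)^k * x^(n-k) * (of_int (pell_lucas (k+1)) + 2 * (x - 1) * of_int (pell k)))
           = 2 * (-1)^n * of_int (pell (n+1))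
    \<and> (\<Sum>k=0..n. (-1)^k * x^(n-k) * (4 * of_int (pell (k+1)) + (x - 1) * of_int (pell_lucas k)))
           = (-1)^n * of_int (pell_lucas (n+1)) + 2 * x^(n+1)"
proof (intro conjI)
  show "(\<Sum>k=0..n. (-1)^k * x^(n-k) * (of_int (lucas (k+1)) + (x - 2) * of_int (fibo k)))
          = (-1)^n * of_int (fibo (n+1))"
    by (subst alternating_power_sum_telescope[where a = "\<lambda>k. of_int (fibo k)"])
      (simp_all add: lucas_Suc_eq_fibo algebra_simps)
  show "(\<Sum>k=0..n. (-1)^k * x^(n-k) * (5 * of_int (fibo (k+1)) + (x - 2) * of_int (lucas k)))
          = (-1)^n * of_int (lucas (n+1)) + 2 * x^(n+1)"
    using five_fibo_Suc_eq_lucas[THEN arg_cong[where f = "of_int :: int \<Rightarrow> complex"]]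
    by (subst alternating_power_sum_telescope[where a = "\<lambda>k. of_int (lucas k)"])
      (simp_all add: algebra_simps)
  show "(\<Sum>k=0..n. (-1)^k * x^(n-k) * (of_int (pell_lucas (k+1)) + 2 * (x - 1) * of_int (pell k)))
          = 2 * (-1)^n * of_int (pell (n+1))"
    by (subst alternating_power_sum_telescope[where a = "\<lambda>k. 2 * of_int (pell k)"])
      (simp_all add: pell_lucas_Suc_eq_pell algebra_simps)
  show "(\<Sum>k=0..n. (-1)^k * x^(n-k) * (4 * of_int (pell (k+1)) + (x - 1) * of_int (pell_lucas k)))
          = (-1)^n * of_int (pell_lucas (n+1)) + 2 * x^(n+1)"
    using four_pell_Suc_eq_pell_lucas[THEN arg_cong[where f = "of_int :: int \<Rightarrow> complex"]]
    by (subst alternating_power_sum_telescope[where a = "\<lambda>k. of_int (pell_lucas k)"])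
      (simp_all add: algebra_simps)
qed

end
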